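(* Let $\mu,\gamma>0$ and define for $x\ge0$ $$h(x)=e^{-\gamma x/\mu-\mu x^2}\,U\Big(-\frac{\gamma^2}{4\mu^3}+\frac12,\frac12,\Big(\frac{\gamma}{\mu^{3/2}}+\sqrt\mu\,x\Big)^2\Big).$$ Then (i) $h$ is positive on $[0,\infty)$; (ii) $h''(0)=0$; (iii) $\int_0^\infty h(x)\,dx<\infty$; (iv) $h'(x)<0$ for all $x>0$.
   Context: Kummer's function is $M(a,b,x)=\sum_{n\ge0}\frac{(a)_n}{(b)_n}\frac{x^n}{n!}$ with $(a)_0=1$, $(a)_n=a(a+1)\cdots(a+n-1)$. The Tricomi confluent hypergeometric function is, for $b\notin\mathbb Z$, $U(a,b,x)=\frac{\Gamma(1-b)}{\Gamma(a-b+1)}M(a,b,x)+\frac{\Gamma(b-1)}{\Gamma(a)}x^{1-b}M(1+a-b,2-b,x)$ (with $1/\Gamma$ at poles of $\Gamma$ equal to $0$); it solves $xz''+(b-x)z'-az=0$ and $U(a,b,x)\sim x^{-a}$ as $x\to\infty$. *)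

theory Defs
  imports "HOL-Analysis.Analysis"
begin

definition kummerM :: "real \<Rightarrow> real \<Rightarrow> real \<Rightarrow> real" where
  "kummerM a b x = (\<Sum>n. pochhammer a n / pochhammer b n * x ^ n / fact n)"

text \<open>Tricomi's function U(a,b,x) for b not an integer (and x > 0), via the
  connection formula; 1/Gamma is rGamma, which vanishes at the poles of Gamma.\<close>
definition tricomiU :: "real \<Rightarrow> real \<Rightarrow> real \<Rightarrow> real" where
  "tricomiU a b x =
     Gamma (1 - b) * rGamma (a - b + 1) * kummerM a b x
   + Gamma (b - 1) * rGamma a * x powr (1 - b) * kummerM (1 + a - b) (2 - b) x"

end

theory Submission
  imports Defs
begin

text \<open>
  For \<open>s \<ge> 0\<close>, \<open>U(a, 1/2, s\<^sup>2)\<close> is the restriction of an entire function \<open>V a s\<close>, and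
  \<open>D a s = exp (-s\<^sup>2/2) V a s\<close>, a parabolic cylinder function, solves
  \<open>D'' = (s\<^sup>2 + 4a - 1) D\<close> and the contiguous relation \<open>D (a - 1/2) = (s D a - D' a) / 2\<close>.
  For \<open>a > 0\<close> the integral representation
  \<open>\<Gamma>(a) \<Gamma>(a + 1/2) V a s / \<surd>\<pi> = \<integral>\<^sub>0\<^sup>\<infinity> u\<^sup>a\<^sup>-\<^sup>1 exp (-u - 2 s \<surd>u) du\<close>
  shows that \<open>D a\<close> is positive and bounded. Where \<open>s\<^sup>2 + 4a \<ge> 2\<close>, a positive solution of
  subexponential growth must be decreasing, and then the contiguous relation passes positivity
  and subexponential growth on \<open>[c, \<infinity>)\<close> from \<open>a\<close> to \<open>a - 1/2\<close>; downward induction reaches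
  every \<open>a\<close> with \<open>c\<^sup>2 + 4a \<ge> 2\<close>.
  With \<open>c = \<gamma> / \<mu>\<^sup>3\<^sup>/\<^sup>2\<close> and \<open>a = 1/2 - \<gamma>\<^sup>2 / (4\<mu>\<^sup>3)\<close> we have \<open>c\<^sup>2 + 4a = 2\<close> and
  \<open>h x = exp (c s - s\<^sup>2/2) D a s\<close> for \<open>s = c + \<surd>\<mu> x\<close>: the tilt adds \<open>(c - s) D a s \<le> 0\<close>
  to the derivative, \<open>h''(0)\<close> reduces to \<open>(c\<^sup>2 + 4a - 2) D a c = 0\<close>, and \<open>h\<close> is dominated
  by a Gaussian.
\<close>

lemma kummer_series_summable:
  fixes a b x :: real
  assumes "b > 0"
  shows "summable (\<lambda>n. pochhammer a n / pochhammer b n * x ^ n / fact n)"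
proof (rule summable_ratio_test[where c = "1/2" and N = "nat \<lceil>2 * (\<bar>a\<bar> / b + 1) * \<bar>x\<bar>\<rceil>"])
  fix n :: nat
  assume "nat \<lceil>2 * (\<bar>a\<bar> / b + 1) * \<bar>x\<bar>\<rceil> \<le> n"
  then have n: "2 * (\<bar>a\<bar> / b + 1) * \<bar>x\<bar> \<le> n" by linarith
  have "pochhammer b n > 0" using assms by (intro pochhammer_pos)
  then have ratio: "pochhammer a (Suc n) / pochhammer b (Suc n) * x ^ Suc n / fact (Suc n)
      = (pochhammer a n / pochhammer b n * x ^ n / fact n) * ((a + n) * x / ((b + n) * (n + 1)))"
    using assms by (simp add: pochhammer_rec' field_simps)
  have "\<bar>a + n\<bar> \<le> \<bar>a\<bar> + n" by simp
  also have "\<dots> \<le> (\<bar>a\<bar> / b + 1) * (b + n)" using assms by (simp add: field_simps)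
  finally have "\<bar>a + n\<bar> * \<bar>x\<bar> \<le> (\<bar>a\<bar> / b + 1) * (b + n) * \<bar>x\<bar>"
    by (rule mult_right_mono) simp
  also have "\<dots> \<le> (b + n) * (n / 2)"
    using n assms by (simp add: mult.commute mult.left_commute mult_left_mono)
  also have "\<dots> \<le> (b + n) * (n + 1) / 2"
    using assms by (simp add: field_simps)
  finally have "\<bar>(a + n) * x / ((b + n) * (n + 1))\<bar> \<le> 1/2"
    using assms by (simp add: abs_mult abs_divide divide_le_eq)
  then have "\<bar>(pochhammer a n / pochhammer b n * x ^ n / fact n) * ((a + n) * x / ((b + n) * (n + 1)))\<bar>
      \<le> \<bar>pochhammer a n / pochhammer b n * x ^ n / fact n\<bar> * (1/2)"
    unfolding abs_mult by (rule mult_left_mono) simp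
  then show "norm (pochhammer a (Suc n) / pochhammer b (Suc n) * x ^ Suc n / fact (Suc n))
        \<le> 1/2 * norm (pochhammer a n / pochhammer b n * x ^ n / fact n)"
    unfolding ratio real_norm_def by simp
qed simp

lemma kummerM_sums:
  "b > 0 \<Longrightarrow> (\<lambda>n. pochhammer a n / pochhammer b n * x ^ n / fact n) sums kummerM a b x"
  unfolding kummerM_def by (intro summable_sums kummer_series_summable)

lemma pochhammer_one_half_pos: "pochhammer (1/2::real) m > 0"
  by (intro pochhammer_pos) simp

lemma pochhammer_three_halves: "pochhammer (3/2::real) m = (2 * real m + 1) * pochhammer (1/2) m"
proof -
  have "pochhammer (1/2::real) (Suc m) = 1/2 * pochhammer (3/2) m"
    using pochhammer_rec[of "1/2::real" m] by simp
  also have "pochhammer (1/2::real) (Suc m) = (1/2 + real m) * pochhammer (1/2) m"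
    by (rule pochhammer_rec')
  finally show ?thesis by (simp add: field_simps)
qed

lemma fact_Suc_double: "fact (Suc (2 * m)) = (2 ^ (2 * m) * pochhammer (3/2) m * fact m :: real)"
  unfolding fact_Suc fact_double pochhammer_three_halves by simp

lemma kummerM_one_half_sums:
  "(\<lambda>m. (2 * t) ^ (2 * m) / fact (2 * m) * pochhammer b m) sums kummerM b (1/2) (t\<^sup>2)"
proof -
  have "(2 * t) ^ (2 * m) = 2 ^ (2 * m) * (t\<^sup>2) ^ m" for m
    by (simp add: power_mult_distrib power_mult)
  then have "(2 * t) ^ (2 * m) / fact (2 * m) * pochhammer b m
      = pochhammer b m / pochhammer (1/2) m * (t\<^sup>2) ^ m / fact m" for m
    unfolding fact_double using pochhammer_one_half_pos[of m] by (simp add: field_simps)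
  then show ?thesis using kummerM_sums[of "1/2" b "t\<^sup>2"] by simp
qed

lemma kummerM_three_halves_sums:
  "(\<lambda>m. (2 * t) ^ Suc (2 * m) / fact (Suc (2 * m)) * pochhammer b m) sums (2 * t * kummerM b (3/2) (t\<^sup>2))"
proof -
  have "(2 * t) ^ Suc (2 * m) = 2 * t * (2 ^ (2 * m) * (t\<^sup>2) ^ m)" for m
    by (simp add: power_mult_distrib power_mult)
  moreover have "pochhammer (3/2::real) m > 0" for m by (intro pochhammer_pos) simp
  moreover have "(t\<^sup>2) ^ m = t ^ (m * 2)" for m by (metis power_mult mult.commute)
  ultimately have "(2 * t) ^ Suc (2 * m) / fact (Suc (2 * m)) * pochhammer b m
      = 2 * t * (pochhammer b m / pochhammer (3/2) m * (t\<^sup>2) ^ m / fact m)" for m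
    unfolding fact_Suc_double by (simp add: field_simps)
  then show ?thesis using sums_mult[OF kummerM_sums[of "3/2" b "t\<^sup>2"], of "2 * t"] by simp
qed

text \<open>\<open>half_gamma_ratio b n = \<surd>\<pi> \<Gamma>(b + n/2) / (\<Gamma>(b) \<Gamma>(b + 1/2))\<close>, written with Pochhammer
  symbols so that it stays valid at the poles of \<open>\<Gamma>\<close>.\<close>

definition half_gamma_ratio :: "real \<Rightarrow> nat \<Rightarrow> real" where
  "half_gamma_ratio b n = sqrt pi * (if even n then rGamma (b + 1/2) * pochhammer b (n div 2)
                                      else rGamma b * pochhammer (b + 1/2) (n div 2))"

definition Uhalf_coeff :: "real \<Rightarrow> nat \<Rightarrow> real" where
  "Uhalf_coeff b n = (-2) ^ n / fact n * half_gamma_ratio b n"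

lemma half_gamma_ratio_Suc_Suc:
  "half_gamma_ratio b (Suc (Suc n)) = (b + n / 2) * half_gamma_ratio b n"
  by (cases "even n") (auto simp: half_gamma_ratio_def pochhammer_rec' elim!: evenE oddE)

lemma half_gamma_ratio_contiguous:
  "half_gamma_ratio b (Suc n) - n / 2 * half_gamma_ratio b (n - 1) = half_gamma_ratio (b - 1/2) n"
proof (cases "even n")
  case True
  then obtain m where n: "n = 2 * m" by (auto elim!: evenE)
  show ?thesis
  proof (cases m)
    case 0 then show ?thesis using n by (simp add: half_gamma_ratio_def)
  next
    case (Suc k)
    have "pochhammer (b + 1/2) (Suc k) - (k + 1) * pochhammer (b + 1/2) k = pochhammer (b - 1/2) (Suc k)"
      using pochhammer_rec[of "b - 1/2" k] pochhammer_rec'[of "b + 1/2" k] by (simp add: algebra_simps)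
    then show ?thesis using n Suc by (simp add: half_gamma_ratio_def algebra_simps)
  qed
next
  case False
  then obtain m where n: "n = Suc (2 * m)" by (auto elim!: oddE)
  have rGamma_minus_half: "rGamma (b - 1/2) = (b - 1/2) * rGamma (b + 1/2)"
    using rGamma_plus1[of "b - 1/2"] by (simp add: algebra_simps)
  show ?thesis
    using n by (simp add: half_gamma_ratio_def pochhammer_rec' rGamma_minus_half algebra_simps)
qed

lemma Suc_mult_neg_two_power_div_fact:
  "real (Suc n) * ((-2) ^ Suc n / fact (Suc n)) = - 2 * ((-2) ^ n / fact n :: real)"
  by (simp add: divide_simps)

lemma Uhalf_coeff_contiguous:
  "real (Suc n) * Uhalf_coeff b (Suc n) - (if n = 0 then 0 else 2 * Uhalf_coeff b (n - 1))
     = - 2 * Uhalf_coeff (b - 1/2) n"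
proof (cases n)
  case 0 then show ?thesis using half_gamma_ratio_contiguous[of b 0] by (simp add: Uhalf_coeff_def)
next
  case (Suc k)
  let ?w = "\<lambda>n. (-2) ^ n / fact n :: real"
  have up: "real (Suc n) * Uhalf_coeff b (Suc n) = - 2 * ?w n * half_gamma_ratio b (Suc n)"
    by (simp only: Uhalf_coeff_def mult.assoc[symmetric] Suc_mult_neg_two_power_div_fact)
  have "real n * ?w n = - 2 * ?w k"
    unfolding Suc by (rule Suc_mult_neg_two_power_div_fact)
  then have "?w k = - (n / 2) * ?w n" by linarith
  then have down: "2 * Uhalf_coeff b (n - 1) = - 2 * ?w n * (n / 2 * half_gamma_ratio b (n - 1))"
    using Suc by (simp add: Uhalf_coeff_def)
  have "real (Suc n) * Uhalf_coeff b (Suc n) - (if n = 0 then 0 else 2 * Uhalf_coeff b (n - 1))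
      = - 2 * ?w n * (half_gamma_ratio b (Suc n) - n / 2 * half_gamma_ratio b (n - 1))"
    unfolding up down using Suc by (simp add: right_diff_distrib)
  also have "\<dots> = - 2 * Uhalf_coeff (b - 1/2) n"
    unfolding half_gamma_ratio_contiguous Uhalf_coeff_def by simp
  finally show ?thesis .
qed

lemma Uhalf_coeff_recurrence:
  "real (Suc n) * real (Suc (Suc n)) * Uhalf_coeff b (Suc (Suc n)) = (2 * real n + 4 * b) * Uhalf_coeff b n"
proof -
  let ?w = "\<lambda>n. (-2) ^ n / fact n :: real"
  have w: "real (Suc n) * real (Suc (Suc n)) * ?w (Suc (Suc n)) = 4 * ?w n"
    using Suc_mult_neg_two_power_div_fact[of "Suc n"] Suc_mult_neg_two_power_div_fact[of n]
    by (metis (no_types, lifting) mult.assoc mult.left_commute mult_minus_left minus_minus numeral_Bit0 mult_2)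
  have "real (Suc n) * real (Suc (Suc n)) * Uhalf_coeff b (Suc (Suc n))
      = (real (Suc n) * real (Suc (Suc n)) * ?w (Suc (Suc n))) * ((b + n / 2) * half_gamma_ratio b n)"
    unfolding Uhalf_coeff_def half_gamma_ratio_Suc_Suc by (simp only: mult.assoc)
  also have "\<dots> = (2 * real n + 4 * b) * Uhalf_coeff b n"
    unfolding w Uhalf_coeff_def by (simp add: field_simps)
  finally show ?thesis .
qed

text \<open>For \<open>t \<ge> 0\<close>, \<open>Uhalf b t = U(b, 1/2, t\<^sup>2)\<close> (lemma \<open>tricomiU_one_half\<close>); unlike \<open>U\<close> it is
  an entire function of \<open>t\<close>, with Taylor coefficients \<open>Uhalf_coeff b\<close>.\<close>

definition Uhalf :: "real \<Rightarrow> real \<Rightarrow> real" where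
  "Uhalf b t = sqrt pi * rGamma (b + 1/2) * kummerM b (1/2) (t\<^sup>2)
             - 2 * sqrt pi * rGamma b * t * kummerM (b + 1/2) (3/2) (t\<^sup>2)"

lemma Gamma_minus_one_half: "Gamma (- 1/2 :: real) = - 2 * sqrt pi"
proof -
  have "rGamma (- 1/2 :: real) = - 1/2 * rGamma (1/2)"
    using rGamma_plus1[of "- 1/2 :: real"] by simp
  then have "rGamma (- 1/2 :: real) = inverse (- 2 * sqrt pi)"
    by (simp add: rGamma_inverse_Gamma Gamma_one_half_real)
  then show ?thesis
    by (metis inverse_inverse_eq rGamma_inverse_Gamma)
qed

lemma tricomiU_one_half:
  assumes "s \<ge> 0"
  shows "tricomiU a (1/2) (s\<^sup>2) = Uhalf a s"
proof -
  have "(s\<^sup>2) powr (1 - 1/2) = s" using assms by (simp add: powr_half_sqrt)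
  moreover have "Gamma (1/2 - 1 :: real) = - 2 * sqrt pi" using Gamma_minus_one_half by simp
  ultimately show ?thesis
    unfolding tricomiU_def Uhalf_def by (simp add: Gamma_one_half_real algebra_simps)
qed

lemma Uhalf_coeff_sums: "(\<lambda>n. Uhalf_coeff b n * t ^ n) sums Uhalf b t"
proof -
  have even: "Uhalf_coeff b (2 * m) * t ^ (2 * m)
      = sqrt pi * rGamma (b + 1/2) * ((2 * t) ^ (2 * m) / fact (2 * m) * pochhammer b m)" for m
    by (simp add: Uhalf_coeff_def half_gamma_ratio_def power_mult_distrib)
  have odd: "Uhalf_coeff b (Suc (2 * m)) * t ^ Suc (2 * m)
      = - sqrt pi * rGamma b * ((2 * t) ^ Suc (2 * m) / fact (Suc (2 * m)) * pochhammer (b + 1/2) m)" for m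
    by (simp add: Uhalf_coeff_def half_gamma_ratio_def power_mult_distrib)
  let ?even = "\<lambda>m. Uhalf_coeff b (2 * m) * t ^ (2 * m)"
  let ?odd = "\<lambda>m. Uhalf_coeff b (Suc (2 * m)) * t ^ Suc (2 * m)"
  have odd_sums: "?odd sums (- sqrt pi * rGamma b * (2 * t * kummerM (b + 1/2) (3/2) (t\<^sup>2)))"
    unfolding odd by (intro sums_mult kummerM_three_halves_sums)
  have even_sums: "?even sums (sqrt pi * rGamma (b + 1/2) * kummerM b (1/2) (t\<^sup>2))"
    unfolding even by (intro sums_mult kummerM_one_half_sums)
  have "(\<lambda>n. if even n then ?even (n div 2) else ?odd ((n - 1) div 2)) sums
      (- sqrt pi * rGamma b * (2 * t * kummerM (b + 1/2) (3/2) (t\<^sup>2))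
       + sqrt pi * rGamma (b + 1/2) * kummerM b (1/2) (t\<^sup>2))"
    by (rule sums_if[OF odd_sums even_sums])
  moreover have "(\<lambda>n. if even n then ?even (n div 2) else ?odd ((n - 1) div 2)) = (\<lambda>n. Uhalf_coeff b n * t ^ n)"
    by (auto elim!: oddE)
  ultimately show ?thesis by (simp add: Uhalf_def mult_ac)
qed

lemma Uhalf_coeff_summable: "summable (\<lambda>n. Uhalf_coeff b n * t ^ n)"
  using Uhalf_coeff_sums by (rule sums_summable)

definition Uhalf' :: "real \<Rightarrow> real \<Rightarrow> real" where
  "Uhalf' b t = (\<Sum>n. diffs (Uhalf_coeff b) n * t ^ n)"

definition Uhalf'' :: "real \<Rightarrow> real \<Rightarrow> real" where
  "Uhalf'' b t = (\<Sum>n. diffs (diffs (Uhalf_coeff b)) n * t ^ n)"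

lemma Uhalf'_sums: "(\<lambda>n. diffs (Uhalf_coeff b) n * t ^ n) sums Uhalf' b t"
  unfolding Uhalf'_def by (intro summable_sums termdiff_converges_all Uhalf_coeff_summable)

lemma Uhalf''_sums: "(\<lambda>n. diffs (diffs (Uhalf_coeff b)) n * t ^ n) sums Uhalf'' b t"
  unfolding Uhalf''_def
  by (intro summable_sums termdiff_converges_all sums_summable[OF Uhalf'_sums])

lemma Uhalf_has_derivative: "(Uhalf b has_real_derivative Uhalf' b t) (at t)"
proof -
  have "Uhalf b = (\<lambda>t. \<Sum>n. Uhalf_coeff b n * t ^ n)"
    using Uhalf_coeff_sums by (auto simp: sums_iff)
  then show ?thesis
    unfolding Uhalf'_def by (simp add: termdiffs_strong_converges_everywhere Uhalf_coeff_summable)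
qed

lemma Uhalf'_has_derivative: "(Uhalf' b has_real_derivative Uhalf'' b t) (at t)"
proof -
  have "Uhalf' b = (\<lambda>t. \<Sum>n. diffs (Uhalf_coeff b) n * t ^ n)"
    by (simp add: Uhalf'_def[abs_def])
  then show ?thesis
    unfolding Uhalf''_def
    by (simp add: termdiffs_strong_converges_everywhere sums_summable[OF Uhalf'_sums])
qed

lemma sums_mult_var_shift:
  fixes c :: "nat \<Rightarrow> real"
  assumes "(\<lambda>n. c n * t ^ n) sums s"
  shows "(\<lambda>n. (if n = 0 then 0 else c (n - 1)) * t ^ n) sums (t * s)"
proof -
  have "(\<lambda>n. t * (c n * t ^ n)) sums (t * s)" by (rule sums_mult) (rule assms)
  then have "(\<lambda>n. (\<lambda>n. (if n = 0 then 0 else c (n - 1)) * t ^ n) (Suc n)) sums (t * s)"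
    by (simp add: mult_ac)
  from sums_Suc[OF this] show ?thesis by simp
qed

lemma Uhalf_contiguous: "Uhalf' b t - 2 * t * Uhalf b t = - 2 * Uhalf (b - 1/2) t"
proof -
  let ?c = "\<lambda>n. diffs (Uhalf_coeff b) n - 2 * (if n = 0 then 0 else Uhalf_coeff b (n - 1))"
  have "(\<lambda>n. ?c n * t ^ n) sums (Uhalf' b t - 2 * (t * Uhalf b t))"
    using sums_diff[OF Uhalf'_sums sums_mult[OF sums_mult_var_shift[OF Uhalf_coeff_sums], of 2]]
    by (simp add: left_diff_distrib mult.assoc)
  moreover have "?c n = - 2 * Uhalf_coeff (b - 1/2) n" for n
    using Uhalf_coeff_contiguous[of n b] by (cases n) (simp_all add: diffs_def)
  ultimately have "(\<lambda>n. - 2 * (Uhalf_coeff (b - 1/2) n * t ^ n)) sums (Uhalf' b t - 2 * (t * Uhalf b t))"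
    by (simp add: mult.assoc)
  from sums_unique2[OF this sums_mult[OF Uhalf_coeff_sums]] show ?thesis by simp
qed

lemma Uhalf_ode: "Uhalf'' b t = 2 * t * Uhalf' b t + 4 * b * Uhalf b t"
proof -
  let ?c = "\<lambda>n. 2 * (if n = 0 then 0 else diffs (Uhalf_coeff b) (n - 1)) + 4 * b * Uhalf_coeff b n"
  have "(\<lambda>n. ?c n * t ^ n) sums (2 * (t * Uhalf' b t) + 4 * b * Uhalf b t)"
    using sums_add[OF sums_mult[OF sums_mult_var_shift[OF Uhalf'_sums], of 2] sums_mult[OF Uhalf_coeff_sums, of "4 * b"]]
    by (simp add: distrib_right mult.assoc)
  moreover have "?c n = diffs (diffs (Uhalf_coeff b)) n" for n
    using Uhalf_coeff_recurrence[of n b] by (cases n) (simp_all add: diffs_def algebra_simps)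
  ultimately have "(\<lambda>n. diffs (diffs (Uhalf_coeff b)) n * t ^ n) sums (2 * (t * Uhalf' b t) + 4 * b * Uhalf b t)"
    by simp
  from sums_unique2[OF Uhalf''_sums this] show ?thesis by simp
qed

text \<open>Up to a constant factor, \<open>pcf b t\<close> is the parabolic cylinder function \<open>U(2b - 1/2, \<surd>2 t)\<close>.\<close>

definition pcf :: "real \<Rightarrow> real \<Rightarrow> real" where
  "pcf b t = exp (- t\<^sup>2 / 2) * Uhalf b t"

definition pcf' :: "real \<Rightarrow> real \<Rightarrow> real" where
  "pcf' b t = exp (- t\<^sup>2 / 2) * (Uhalf' b t - t * Uhalf b t)"

lemma pcf_has_derivative: "(pcf b has_real_derivative pcf' b t) (at t)"
  unfolding pcf_def[abs_def] pcf'_def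
  by (auto intro!: derivative_eq_intros Uhalf_has_derivative simp: algebra_simps)

lemma pcf'_has_derivative: "(pcf' b has_real_derivative (t\<^sup>2 + 4 * b - 1) * pcf b t) (at t)"
proof -
  have "(pcf' b has_real_derivative exp (- t\<^sup>2 / 2) * (- t) * (Uhalf' b t - t * Uhalf b t)
      + exp (- t\<^sup>2 / 2) * (Uhalf'' b t - (Uhalf b t + t * Uhalf' b t))) (at t)"
    unfolding pcf'_def[abs_def]
    by (auto intro!: derivative_eq_intros Uhalf_has_derivative Uhalf'_has_derivative simp: algebra_simps)
  moreover have "exp (- t\<^sup>2 / 2) * (- t) * (Uhalf' b t - t * Uhalf b t)
      + exp (- t\<^sup>2 / 2) * (Uhalf'' b t - (Uhalf b t + t * Uhalf' b t)) = (t\<^sup>2 + 4 * b - 1) * pcf b t"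
    unfolding pcf_def Uhalf_ode by (simp add: algebra_simps power2_eq_square)
  ultimately show ?thesis by simp
qed

lemma pcf_contiguous: "pcf (b - 1/2) t = (t * pcf b t - pcf' b t) / 2"
proof -
  have U: "Uhalf (b - 1/2) t = (2 * t * Uhalf b t - Uhalf' b t) / 2"
    using Uhalf_contiguous[of b t] by simp
  show ?thesis unfolding pcf_def pcf'_def U by (simp add: field_simps)
qed

section \<open>Positive solutions of \<open>y'' = q y\<close>\<close>

lemma ode_deriv_mono:
  fixes f f' q :: "real \<Rightarrow> real"
  assumes f'': "\<And>t. (f' has_real_derivative q t * f t) (at t)"
    and nonneg: "\<And>t. t \<ge> c \<Longrightarrow> q t * f t \<ge> 0"
    and "c \<le> s" "s \<le> u"
  shows "f' s \<le> f' u"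
  using \<open>s \<le> u\<close>
proof (rule DERIV_nonneg_imp_nondecreasing)
  fix x assume "s \<le> x"
  then show "\<exists>y. (f' has_real_derivative y) (at x) \<and> 0 \<le> y"
    using f'' nonneg \<open>c \<le> s\<close> by force
qed

lemma deriv_le_secant:
  fixes f f' :: "real \<Rightarrow> real"
  assumes f': "\<And>x. (f has_real_derivative f' x) (at x)"
    and mono: "\<And>x. t \<le> x \<Longrightarrow> f' t \<le> f' x"
  shows "f' t \<le> f (t + 1) - f t"
proof -
  have "f t - f' t * t \<le> f (t + 1) - f' t * (t + 1)"
  proof (rule DERIV_nonneg_imp_nondecreasing[of t "t + 1"])
    fix x assume "t \<le> x"
    have "((\<lambda>s. f s - f' t * s) has_real_derivative f' x - f' t) (at x)"
      by (auto intro!: derivative_eq_intros f')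
    then show "\<exists>y. ((\<lambda>s. f s - f' t * s) has_real_derivative y) (at x) \<and> 0 \<le> y"
      using mono[OF \<open>t \<le> x\<close>] by (metis diff_ge_0_iff_ge)
  qed simp
  then show ?thesis by (simp add: algebra_simps)
qed

text \<open>Since \<open>q \<ge> 1\<close>, \<open>(f' + f) e\<^sup>-\<^sup>t\<close> is nondecreasing, so a single point with \<open>f' \<ge> 0\<close>
  makes \<open>f\<close> grow like \<open>e\<^sup>t\<close>.\<close>

lemma ode_positive_solution_deriv_neg:
  fixes f f' q :: "real \<Rightarrow> real"
  assumes f': "\<And>t. (f has_real_derivative f' t) (at t)"
    and f'': "\<And>t. (f' has_real_derivative q t * f t) (at t)"
    and q: "\<And>t. t \<ge> c \<Longrightarrow> q t \<ge> 1"
    and pos: "\<And>t. t \<ge> c \<Longrightarrow> f t > 0"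
    and bound: "\<And>t. t \<ge> c \<Longrightarrow> f t \<le> B * exp (t / 2)"
    and "t\<^sub>0 \<ge> c"
  shows "f' t\<^sub>0 < 0"
proof (rule ccontr)
  assume "\<not> f' t\<^sub>0 < 0"
  define A where "A = (f' t\<^sub>0 + f t\<^sub>0) * exp (- t\<^sub>0)"
  have A: "A > 0" unfolding A_def using \<open>\<not> f' t\<^sub>0 < 0\<close> pos[OF \<open>t\<^sub>0 \<ge> c\<close>] by simp
  have "0 < B * exp (c / 2)" using pos[of c] bound[of c] by simp
  then have B: "B > 0" by (simp add: zero_less_mult_iff)
  have growth: "A * exp t \<le> f' t + f t" if "t \<ge> t\<^sub>0" for t
  proof -
    have "A \<le> (f' t + f t) * exp (- t)"
      unfolding A_def using that
    proof (rule DERIV_nonneg_imp_nondecreasing)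
      fix x assume "t\<^sub>0 \<le> x"
      have "((\<lambda>x. (f' x + f x) * exp (- x)) has_real_derivative (q x - 1) * f x * exp (- x)) (at x)"
        by (auto intro!: derivative_eq_intros f' f'' simp: algebra_simps)
      moreover have "(q x - 1) * f x * exp (- x) \<ge> 0"
        using q[of x] pos[of x] \<open>t\<^sub>0 \<le> x\<close> \<open>t\<^sub>0 \<ge> c\<close> by simp
      ultimately show "\<exists>y. ((\<lambda>x. (f' x + f x) * exp (- x)) has_real_derivative y) (at x) \<and> 0 \<le> y"
        by blast
    qed
    then show ?thesis by (simp add: exp_minus field_simps)
  qed
  have secant: "f' t \<le> f (t + 1) - f t" if "t \<ge> c" for t
  proof (rule deriv_le_secant[OF f'])
    fix x assume "t \<le> x"
    then show "f' t \<le> f' x"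
      using ode_deriv_mono[OF f'', of c] q pos that
      by (meson less_le_trans mult_nonneg_nonneg order.strict_implies_order zero_less_one)
  qed
  define t where "t = max t\<^sub>0 (2 * ln (B / A) + 2)"
  have "t \<ge> t\<^sub>0" "t \<ge> c" using \<open>t\<^sub>0 \<ge> c\<close> by (auto simp: t_def)
  have "A * exp t \<le> f (t + 1)" using growth[OF \<open>t \<ge> t\<^sub>0\<close>] secant[OF \<open>t \<ge> c\<close>] by simp
  also have "\<dots> \<le> B * exp ((t + 1) / 2)" using bound \<open>t \<ge> c\<close> by simp
  finally have "A * exp (t / 2) * exp (t / 2) \<le> B * exp (1 / 2) * exp (t / 2)"
    by (simp add: exp_add[symmetric] add_divide_distrib add.commute mult_ac)
  then have "A * exp (t / 2) \<le> B * exp (1 / 2)" by simp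
  moreover have "B * exp 1 \<le> A * exp (t / 2)"
  proof -
    have "B * exp 1 = A * exp (ln (B / A) + 1)" using A B by (simp add: exp_add)
    also have "\<dots> \<le> A * exp (t / 2)" using A by (simp add: t_def)
    finally show ?thesis .
  qed
  moreover have "B * exp (1 / 2) < B * exp 1" using B by simp
  ultimately show False by linarith
qed

section \<open>An integral representation\<close>

lemma has_integral_sums_nonneg:
  fixes f :: "nat \<Rightarrow> real \<Rightarrow> real"
  assumes int: "\<And>m. (f m has_integral a m) S"
    and nonneg: "\<And>m x. x \<in> S \<Longrightarrow> f m x \<ge> 0"
    and pointwise: "\<And>x. x \<in> S \<Longrightarrow> (\<lambda>m. f m x) sums g x"
    and "a sums s"
  shows "(g has_integral s) S"
proof -
  define F where "F k x = (\<Sum>m<k. f m x)" for k x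
  have a_nonneg: "a m \<ge> 0" for m
    using has_integral_nonneg[OF int[of m]] nonneg by auto
  have F_has_integral: "(F k has_integral (\<Sum>m<k. a m)) S" for k
    unfolding F_def[abs_def] by (intro has_integral_sum) (auto intro: int)
  then have F_integral: "integral S (F k) = (\<Sum>m<k. a m)" for k
    by (rule integral_unique)
  have "g integrable_on S \<and> ((\<lambda>k. integral S (F k)) \<longlonglongrightarrow> integral S g)"
  proof (rule monotone_convergence_increasing)
    show "F k integrable_on S" for k
      using F_has_integral by blast
    show "F k x \<le> F (Suc k) x" if "x \<in> S" for k x
      using nonneg[OF that, of k] by (simp add: F_def)
    show "(\<lambda>k. F k x) \<longlonglongrightarrow> g x" if "x \<in> S" for x
      using pointwise[OF that] by (simp add: F_def sums_def)
    have "\<bar>\<Sum>m<k. a m\<bar> \<le> s" for k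
      using sum_le_suminf[of a "{..<k}"] \<open>a sums s\<close> a_nonneg
      by (simp add: sum_nonneg sums_iff)
    then show "bounded (range (\<lambda>k. integral S (F k)))"
      unfolding bounded_real F_integral by auto
  qed
  moreover have "(\<lambda>k. integral S (F k)) \<longlonglongrightarrow> s"
    using \<open>a sums s\<close> unfolding F_integral sums_def .
  ultimately show ?thesis
    using LIMSEQ_unique has_integral_integral by metis
qed

lemma cosh_sums_even_powers: "(\<lambda>m. x ^ (2 * m) / fact (2 * m)) sums cosh (x :: real)"
proof -
  have "(\<lambda>m. (\<lambda>n. if even n then x ^ n /\<^sub>R fact n else 0) (2 * m)) sums cosh x"
    by (subst sums_mono_reindex) (auto simp: strict_mono_def cosh_converges elim!: evenE)
  then show ?thesis by (simp add: divide_inverse mult.commute)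
qed

lemma sinh_sums_odd_powers: "(\<lambda>m. x ^ Suc (2 * m) / fact (Suc (2 * m))) sums sinh (x :: real)"
proof -
  have "(\<lambda>m. (\<lambda>n. if even n then 0 else x ^ n /\<^sub>R fact n) (Suc (2 * m))) sums sinh x"
    by (subst sums_mono_reindex) (auto simp: strict_mono_def sinh_converges elim!: oddE)
  then show ?thesis by (simp add: divide_inverse mult.commute)
qed

lemma powr_mult_sqrt_power: "u \<ge> 0 \<Longrightarrow> u powr a * sqrt u ^ k = u powr (a + k / 2)"
  by (cases "u = 0") (simp_all add: powr_half_sqrt[symmetric] powr_power powr_add)

lemma Gamma_plus_nat: "b > 0 \<Longrightarrow> Gamma (b + real m) = Gamma b * pochhammer b m"
  using Gamma_real_pos[of b] by (simp add: pochhammer_Gamma nonpos_Ints_def less_imp_neq[symmetric])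

lemma Gamma_sqrt_power_integral:
  assumes "b > 0"
  shows "((\<lambda>u. u powr (b - 1) / exp u * ((2 * t * sqrt u) ^ k / fact k))
           has_integral (2 * t) ^ k / fact k * Gamma (b + k / 2)) {0..}"
proof -
  have integral: "((\<lambda>u. (2 * t) ^ k / fact k * (u powr (b + k / 2 - 1) / exp u))
          has_integral (2 * t) ^ k / fact k * Gamma (b + k / 2)) {0..}"
    using assms by (intro has_integral_mult_right Gamma_integral_real) simp
  have powr: "u powr (b + k / 2 - 1) = u powr (b - 1) * sqrt u ^ k" if "u \<ge> 0" for u
    using powr_mult_sqrt_power[OF that, of "b - 1" k] by (simp add: algebra_simps)
  show ?thesis
    by (rule has_integral_eq[OF _ integral]) (simp add: powr power_mult_distrib mult_ac)
qed

lemma Gamma_cosh_integral: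
  assumes "b > 0"
  shows "((\<lambda>u. u powr (b - 1) / exp u * cosh (2 * t * sqrt u))
           has_integral Gamma b * kummerM b (1/2) (t\<^sup>2)) {0..}"
proof (rule has_integral_sums_nonneg)
  show "((\<lambda>u. u powr (b - 1) / exp u * ((2 * t * sqrt u) ^ (2 * m) / fact (2 * m)))
          has_integral (2 * t) ^ (2 * m) / fact (2 * m) * Gamma (b + m)) {0..}" for m
    using Gamma_sqrt_power_integral[OF assms, of t "2 * m"] by simp
  have "(2 * t) ^ (2 * m) / fact (2 * m) * Gamma (b + m)
      = Gamma b * ((2 * t) ^ (2 * m) / fact (2 * m) * pochhammer b m)" for m
    using Gamma_plus_nat[OF assms, of m] by simp
  then show "(\<lambda>m. (2 * t) ^ (2 * m) / fact (2 * m) * Gamma (b + m)) sums (Gamma b * kummerM b (1/2) (t\<^sup>2))"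
    by (simp only:) (intro sums_mult kummerM_one_half_sums)
  show "(\<lambda>m. u powr (b - 1) / exp u * ((2 * t * sqrt u) ^ (2 * m) / fact (2 * m)))
          sums (u powr (b - 1) / exp u * cosh (2 * t * sqrt u))" for u
    by (intro sums_mult cosh_sums_even_powers)
qed (simp add: zero_le_even_power)

lemma Gamma_sinh_integral:
  assumes "b > 0" "t \<ge> 0"
  shows "((\<lambda>u. u powr (b - 1) / exp u * sinh (2 * t * sqrt u))
           has_integral Gamma (b + 1/2) * (2 * t * kummerM (b + 1/2) (3/2) (t\<^sup>2))) {0..}"
proof (rule has_integral_sums_nonneg)
  show "((\<lambda>u. u powr (b - 1) / exp u * ((2 * t * sqrt u) ^ Suc (2 * m) / fact (Suc (2 * m))))
          has_integral (2 * t) ^ Suc (2 * m) / fact (Suc (2 * m)) * Gamma (b + 1/2 + m)) {0..}" for m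
    using Gamma_sqrt_power_integral[OF assms(1), of t "Suc (2 * m)"] by (simp add: add_divide_distrib add_ac)
  have "(2 * t) ^ Suc (2 * m) / fact (Suc (2 * m)) * Gamma (b + 1/2 + m)
      = Gamma (b + 1/2) * ((2 * t) ^ Suc (2 * m) / fact (Suc (2 * m)) * pochhammer (b + 1/2) m)" for m
    using Gamma_plus_nat[of "b + 1/2" m] assms by simp
  then show "(\<lambda>m. (2 * t) ^ Suc (2 * m) / fact (Suc (2 * m)) * Gamma (b + 1/2 + m))
          sums (Gamma (b + 1/2) * (2 * t * kummerM (b + 1/2) (3/2) (t\<^sup>2)))"
    by (simp only:) (intro sums_mult kummerM_three_halves_sums)
  show "(\<lambda>m. u powr (b - 1) / exp u * ((2 * t * sqrt u) ^ Suc (2 * m) / fact (Suc (2 * m))))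
          sums (u powr (b - 1) / exp u * sinh (2 * t * sqrt u))" for u
    by (intro sums_mult sinh_sums_odd_powers)
qed (use assms in simp)

lemma Uhalf_integral:
  assumes "b > 0" "t \<ge> 0"
  shows "((\<lambda>u. u powr (b - 1) / exp u * exp (- (2 * t * sqrt u)))
           has_integral Gamma b * Gamma (b + 1/2) / sqrt pi * Uhalf b t) {0..}"
proof -
  have diff_integral: "((\<lambda>u. u powr (b - 1) / exp u * cosh (2 * t * sqrt u) - u powr (b - 1) / exp u * sinh (2 * t * sqrt u))
      has_integral Gamma b * kummerM b (1/2) (t\<^sup>2) - Gamma (b + 1/2) * (2 * t * kummerM (b + 1/2) (3/2) (t\<^sup>2))) {0..}"
    by (intro has_integral_diff Gamma_cosh_integral Gamma_sinh_integral assms)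
  have "Gamma b * rGamma b = 1" "Gamma (b + 1/2) * rGamma (b + 1/2) = 1"
    using Gamma_real_pos[of b] Gamma_real_pos[of "b + 1/2"] assms
    by (simp_all add: rGamma_inverse_Gamma less_imp_neq[symmetric])
  then have integral_value: "Gamma b * kummerM b (1/2) (t\<^sup>2) - Gamma (b + 1/2) * (2 * t * kummerM (b + 1/2) (3/2) (t\<^sup>2))
      = Gamma b * Gamma (b + 1/2) / sqrt pi * Uhalf b t"
    unfolding Uhalf_def by (simp add: field_simps)
  have integrand: "x * cosh y - x * sinh y = x * exp (- y)" for x y :: real
    by (simp add: right_diff_distrib[symmetric] cosh_minus_sinh)
  show ?thesis using diff_integral unfolding integral_value integrand .
qed

lemma Uhalf_bounds:
  assumes "b > 0" "t \<ge> 0"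
  shows "0 < Uhalf b t" and "Uhalf b t \<le> sqrt pi / Gamma (b + 1/2)"
proof -
  define g where "g u = u powr (b - 1) / exp u * exp (- (2 * t * sqrt u))" for u :: real
  define C where "C = Gamma b * Gamma (b + 1/2) / sqrt pi"
  have "C > 0" unfolding C_def using assms by simp
  have g_integral: "(g has_integral C * Uhalf b t) {0..}"
    unfolding g_def C_def using assms by (rule Uhalf_integral)
  have "continuous_on {1..2} g" unfolding g_def by (intro continuous_intros) auto
  then have "0 < integral {1..2::real} g"
    using integral_less_real[of 1 2 "\<lambda>_. 0" g] by (simp add: g_def)
  also have "integral {1..2} g \<le> integral {0..} g"
    using g_integral \<open>continuous_on {1..2} g\<close>
    by (intro integral_subset_le) (auto simp: g_def integrable_continuous_real)
  also have "\<dots> = C * Uhalf b t" using g_integral by (rule integral_unique)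
  finally show "0 < Uhalf b t" using \<open>C > 0\<close> by (simp add: zero_less_mult_iff)
  have "C * Uhalf b t \<le> Gamma b"
  proof (rule has_integral_le[OF g_integral Gamma_integral_real[OF assms(1)]])
    fix u :: real assume "u \<in> {0..}"
    then show "g u \<le> u powr (b - 1) / exp u"
      unfolding g_def using assms by (intro mult_left_le) auto
  qed
  then show "Uhalf b t \<le> sqrt pi / Gamma (b + 1/2)"
    using assms unfolding C_def by (simp add: field_simps)
qed

section \<open>Descent in the parameter\<close>

definition pcf_pos_subexp :: "real \<Rightarrow> real \<Rightarrow> bool" where
  "pcf_pos_subexp c b \<longleftrightarrow> (\<forall>t\<ge>c. pcf b t > 0) \<and> (\<forall>\<epsilon>>0. \<exists>B. \<forall>t\<ge>c. pcf b t \<le> B * exp (\<epsilon> * t))"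

lemma pcf_pos_subexp_of_pos:
  assumes "b > 0" "c \<ge> 0"
  shows "pcf_pos_subexp c b"
  unfolding pcf_pos_subexp_def
proof (intro conjI allI impI exI)
  fix t assume "t \<ge> c"
  then show "pcf b t > 0" using Uhalf_bounds(1)[OF assms(1)] assms(2) unfolding pcf_def by simp
next
  fix \<epsilon> t :: real assume "\<epsilon> > 0" "t \<ge> c"
  then have "t \<ge> 0" using assms(2) by simp
  have "pcf b t \<le> Uhalf b t"
    unfolding pcf_def using Uhalf_bounds(1)[OF assms(1) \<open>t \<ge> 0\<close>] by (intro mult_left_le_one_le) auto
  also have "\<dots> \<le> sqrt pi / Gamma (b + 1/2)"
    using Uhalf_bounds(2)[OF assms(1) \<open>t \<ge> 0\<close>] .
  also have "\<dots> \<le> sqrt pi / Gamma (b + 1/2) * exp (\<epsilon> * t)"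
  proof -
    have "0 \<le> sqrt pi / Gamma (b + 1/2)" "1 \<le> exp (\<epsilon> * t)"
      using assms(1) \<open>\<epsilon> > 0\<close> \<open>t \<ge> 0\<close> by simp_all
    then show ?thesis using mult_left_mono[of 1 "exp (\<epsilon> * t)" "sqrt pi / Gamma (b + 1/2)"] by simp
  qed
  finally show "pcf b t \<le> sqrt pi / Gamma (b + 1/2) * exp (\<epsilon> * t)" .
qed

lemma pcf_ode_coeff_ge_one:
  fixes b c t :: real
  assumes "c \<ge> 0" "c\<^sup>2 + 4 * b \<ge> 2" "t \<ge> c"
  shows "t\<^sup>2 + 4 * b - 1 \<ge> 1"
  using power_mono[OF \<open>t \<ge> c\<close> \<open>c \<ge> 0\<close>, of 2] assms(2) by simp

lemma pcf'_mono:
  assumes "c \<ge> 0" "c\<^sup>2 + 4 * b \<ge> 2" "pcf_pos_subexp c b" "c \<le> s" "s \<le> u"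
  shows "pcf' b s \<le> pcf' b u"
proof (rule ode_deriv_mono[OF pcf'_has_derivative _ \<open>c \<le> s\<close> \<open>s \<le> u\<close>])
  fix t assume "t \<ge> c"
  then have "t\<^sup>2 + 4 * b - 1 \<ge> 1" "pcf b t > 0"
    using pcf_ode_coeff_ge_one[OF assms(1,2)] assms(3) unfolding pcf_pos_subexp_def by auto
  then show "(t\<^sup>2 + 4 * b - 1) * pcf b t \<ge> 0" by simp
qed

lemma pcf'_neg:
  assumes "c \<ge> 0" "c\<^sup>2 + 4 * b \<ge> 2" "pcf_pos_subexp c b" "t \<ge> c"
  shows "pcf' b t < 0"
proof -
  obtain B where B: "\<forall>t\<ge>c. pcf b t \<le> B * exp (1/2 * t)"
    using assms(3) unfolding pcf_pos_subexp_def by (meson half_gt_zero zero_less_one)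
  show ?thesis
  proof (rule ode_positive_solution_deriv_neg[OF pcf_has_derivative pcf'_has_derivative])
    show "t \<ge> c" by fact
    show "t\<^sup>2 + 4 * b - 1 \<ge> 1" if "t \<ge> c" for t
      using pcf_ode_coeff_ge_one[OF assms(1,2) that] .
    show "pcf b t > 0" if "t \<ge> c" for t
      using assms(3) that unfolding pcf_pos_subexp_def by blast
    show "pcf b t \<le> B * exp (t / 2)" if "t \<ge> c" for t
      using B that by simp
  qed
qed

lemma le_exp_mult_div:
  assumes "\<epsilon> > 0"
  shows "t \<le> exp (\<epsilon> * t) / (\<epsilon> :: real)"
proof -
  have "\<epsilon> * t \<le> exp (\<epsilon> * t)" using exp_ge_add_one_self[of "\<epsilon> * t"] by linarith
  then show ?thesis using assms by (simp add: le_divide_eq mult.commute)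
qed

lemma pcf_pos_subexp_minus_half:
  assumes "c \<ge> 0" "c\<^sup>2 + 4 * b \<ge> 2" "pcf_pos_subexp c b"
  shows "pcf_pos_subexp c (b - 1/2)"
  unfolding pcf_pos_subexp_def
proof (intro conjI allI impI)
  fix t assume "t \<ge> c"
  then have "t * pcf b t \<ge> 0"
    using assms(1,3) unfolding pcf_pos_subexp_def by (simp add: less_imp_le)
  then show "pcf (b - 1/2) t > 0"
    unfolding pcf_contiguous using pcf'_neg[OF assms \<open>t \<ge> c\<close>] by simp
next
  fix \<epsilon> :: real assume "\<epsilon> > 0"
  then obtain B where B: "\<forall>t\<ge>c. pcf b t \<le> B * exp (\<epsilon> / 2 * t)"
    using assms(3) unfolding pcf_pos_subexp_def by (meson half_gt_zero)
  show "\<exists>B. \<forall>t\<ge>c. pcf (b - 1/2) t \<le> B * exp (\<epsilon> * t)"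
  proof (intro exI allI impI)
    fix t assume "t \<ge> c"
    have "t * pcf b t \<le> exp (\<epsilon> / 2 * t) / (\<epsilon> / 2) * (\<bar>B\<bar> * exp (\<epsilon> / 2 * t))"
    proof (rule mult_mono)
      show "t \<le> exp (\<epsilon> / 2 * t) / (\<epsilon> / 2)" using \<open>\<epsilon> > 0\<close> by (intro le_exp_mult_div) simp
      have "pcf b t \<le> B * exp (\<epsilon> / 2 * t)" using B \<open>t \<ge> c\<close> by simp
      also have "\<dots> \<le> \<bar>B\<bar> * exp (\<epsilon> / 2 * t)" by (intro mult_right_mono) auto
      finally show "pcf b t \<le> \<bar>B\<bar> * exp (\<epsilon> / 2 * t)" .
      show "0 \<le> pcf b t" using assms(3) \<open>t \<ge> c\<close> unfolding pcf_pos_subexp_def by (simp add: less_imp_le)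
    qed (use \<open>\<epsilon> > 0\<close> in simp)
    also have "\<dots> = 2 * \<bar>B\<bar> / \<epsilon> * (exp (\<epsilon> / 2 * t) * exp (\<epsilon> / 2 * t))"
      by simp
    also have "exp (\<epsilon> / 2 * t) * exp (\<epsilon> / 2 * t) = exp (\<epsilon> * t)"
      by (simp flip: exp_add)
    finally have "t * pcf b t \<le> 2 * \<bar>B\<bar> / \<epsilon> * exp (\<epsilon> * t)" .
    moreover have "- pcf' b t \<le> \<bar>pcf' b c\<bar> * exp (\<epsilon> * t)"
    proof -
      have "- pcf' b t \<le> - pcf' b c" using pcf'_mono[OF assms order_refl \<open>t \<ge> c\<close>] by simp
      also have "\<dots> \<le> \<bar>pcf' b c\<bar> * 1" by simp
      also have "\<dots> \<le> \<bar>pcf' b c\<bar> * exp (\<epsilon> * t)"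
        using \<open>\<epsilon> > 0\<close> \<open>t \<ge> c\<close> assms(1) by (intro mult_left_mono) auto
      finally show ?thesis .
    qed
    ultimately show "pcf (b - 1/2) t \<le> (2 * \<bar>B\<bar> / \<epsilon> + \<bar>pcf' b c\<bar>) / 2 * exp (\<epsilon> * t)"
      unfolding pcf_contiguous by (simp add: algebra_simps add_divide_distrib)
  qed
qed

lemma pcf_pos_subexp:
  assumes "c \<ge> 0" "c\<^sup>2 + 4 * b \<ge> 2"
  shows "pcf_pos_subexp c b"
proof -
  obtain n :: nat where "- 2 * b < n" using reals_Archimedean2 by blast
  then have "b + n / 2 > 0" by simp
  with assms(2) show ?thesis
  proof (induction n arbitrary: b)
    case 0
    then show ?case using pcf_pos_subexp_of_pos assms(1) by simp
  next
    case (Suc n)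
    then have "pcf_pos_subexp c (b + 1/2)" by (simp add: field_simps)
    then show ?case
      using pcf_pos_subexp_minus_half[OF assms(1), of "b + 1/2"] Suc.prems by simp
  qed
qed

lemma pcf_antimono:
  assumes "c \<ge> 0" "c\<^sup>2 + 4 * b \<ge> 2" "c \<le> s" "s \<le> u"
  shows "pcf b u \<le> pcf b s"
  using \<open>s \<le> u\<close>
proof (rule DERIV_nonpos_imp_nonincreasing)
  fix x assume "s \<le> x"
  then have "pcf' b x < 0" using pcf'_neg[OF assms(1,2) pcf_pos_subexp[OF assms(1,2)]] assms(3) by simp
  then show "\<exists>y. (pcf b has_real_derivative y) (at x) \<and> y \<le> 0"
    using pcf_has_derivative by (blast intro: less_imp_le)
qed

section \<open>The tilted function\<close>

definition tilted_pcf :: "real \<Rightarrow> real \<Rightarrow> real \<Rightarrow> real" where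
  "tilted_pcf c b t = exp (c * t - t\<^sup>2 / 2) * pcf b t"

definition tilted_pcf' :: "real \<Rightarrow> real \<Rightarrow> real \<Rightarrow> real" where
  "tilted_pcf' c b t = exp (c * t - t\<^sup>2 / 2) * ((c - t) * pcf b t + pcf' b t)"

definition tilted_pcf'' :: "real \<Rightarrow> real \<Rightarrow> real \<Rightarrow> real" where
  "tilted_pcf'' c b t = exp (c * t - t\<^sup>2 / 2) *
     (((c - t)\<^sup>2 + t\<^sup>2 + 4 * b - 2) * pcf b t + 2 * (c - t) * pcf' b t)"

lemma tilted_pcf_has_derivative: "(tilted_pcf c b has_real_derivative tilted_pcf' c b t) (at t)"
  unfolding tilted_pcf_def[abs_def] tilted_pcf'_def
  by (auto intro!: derivative_eq_intros pcf_has_derivative simp: algebra_simps)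

lemma tilted_pcf'_has_derivative: "(tilted_pcf' c b has_real_derivative tilted_pcf'' c b t) (at t)"
  unfolding tilted_pcf'_def[abs_def] tilted_pcf''_def
  by (auto intro!: derivative_eq_intros pcf_has_derivative pcf'_has_derivative
           simp: algebra_simps power2_eq_square)

lemma tilted_pcf''_eq_0: "c\<^sup>2 + 4 * b = 2 \<Longrightarrow> tilted_pcf'' c b c = 0"
  by (simp add: tilted_pcf''_def)

lemma tilted_pcf_pos:
  assumes "c \<ge> 0" "c\<^sup>2 + 4 * b \<ge> 2" "t \<ge> c"
  shows "tilted_pcf c b t > 0"
  using pcf_pos_subexp[OF assms(1,2)] assms(3)
  unfolding tilted_pcf_def pcf_pos_subexp_def by simp

lemma tilted_pcf'_neg:
  assumes "c \<ge> 0" "c\<^sup>2 + 4 * b \<ge> 2" "t \<ge> c"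
  shows "tilted_pcf' c b t < 0"
proof -
  have "(c - t) * pcf b t \<le> 0"
    using tilted_pcf_pos[OF assms] assms(3) unfolding tilted_pcf_def
    by (simp add: mult_nonpos_nonneg zero_less_mult_iff)
  moreover have "pcf' b t < 0" using pcf'_neg[OF assms(1,2) pcf_pos_subexp[OF assms(1,2)] assms(3)] .
  ultimately show ?thesis unfolding tilted_pcf'_def by (simp add: mult_pos_neg)
qed

lemma tilted_pcf_affine_le_gaussian:
  assumes "c \<ge> 0" "c\<^sup>2 + 4 * b \<ge> 2" "k \<ge> 0" "x \<ge> 0"
  shows "\<bar>tilted_pcf c b (c + k * x)\<bar> \<le> pcf b c * exp (c\<^sup>2 / 2) * exp (- (k\<^sup>2 / 2) * x\<^sup>2)"
proof -
  let ?t = "c + k * x"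
  have "?t \<ge> c" using assms by simp
  then have "\<bar>tilted_pcf c b ?t\<bar> = exp (c * ?t - ?t\<^sup>2 / 2) * pcf b ?t"
    using tilted_pcf_pos[OF assms(1,2) \<open>?t \<ge> c\<close>] unfolding tilted_pcf_def by (simp only: abs_of_pos)
  also have "\<dots> \<le> exp (c * ?t - ?t\<^sup>2 / 2) * pcf b c"
    using pcf_antimono[OF assms(1,2) order_refl \<open>?t \<ge> c\<close>] by simp
  also have "exp (c * ?t - ?t\<^sup>2 / 2) = exp (c\<^sup>2 / 2) * exp (- (k\<^sup>2 / 2) * x\<^sup>2)"
    by (simp add: exp_add[symmetric] power2_eq_square field_simps)
  finally show ?thesis by (simp add: mult_ac)
qed

lemma integrable_on_Ici_if_gaussian_bound:
  fixes f :: "real \<Rightarrow> real"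
  assumes "continuous_on {0..} f" "m > 0" "\<And>x. x \<ge> 0 \<Longrightarrow> \<bar>f x\<bar> \<le> K * exp (- m * x\<^sup>2)"
  shows "f integrable_on {0..}"
proof (rule measurable_bounded_by_integrable_imp_integrable)
  show "f \<in> borel_measurable (lebesgue_on {0..})"
    using assms(1) by (rule continuous_imp_measurable_on_sets_lebesgue) simp
  show "(\<lambda>x. exp (- 1 * x) * (K * exp (1 / (4 * m)))) integrable_on {0..}"
    by (intro integrable_on_mult_left integrable_on_exp_minus_to_infinity) simp
  show "norm (f x) \<le> exp (- 1 * x) * (K * exp (1 / (4 * m)))" if "x \<in> {0..}" for x
  proof -
    have "0 \<le> (2 * m * x - 1)\<^sup>2 / (4 * m)" using assms(2) by simp
    also have "\<dots> = m * x\<^sup>2 - x + 1 / (4 * m)"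
      using assms(2) by (simp add: field_simps power2_eq_square)
    finally have "exp (- m * x\<^sup>2) \<le> exp (1 / (4 * m)) * exp (- 1 * x)"
      by (simp add: exp_add[symmetric])
    moreover have "K \<ge> 0" using assms(3)[of 0] by simp
    ultimately have "K * exp (- m * x\<^sup>2) \<le> K * exp (1 / (4 * m)) * exp (- 1 * x)"
      by (simp add: mult.assoc mult_left_mono)
    then show ?thesis using assms(3)[of x] that by (simp add: mult_ac)
  qed
qed simp

lemma DERIV_affine_comp:
  "(g has_real_derivative g') (at (c + k * x)) \<Longrightarrow> ((\<lambda>x. g (c + k * x)) has_real_derivative g' * k) (at x)"
  by (rule DERIV_chain2) (auto intro!: derivative_eq_intros)

lemma powr_three_halves: "x \<ge> 0 \<Longrightarrow> x powr (3/2) = x * sqrt x"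
  using powr_mult_sqrt_power[of x 1 1] by simp

lemma exp_tricomiU_eq_tilted_pcf:
  fixes \<mu> \<gamma> x :: real
  defines "c \<equiv> \<gamma> / \<mu> powr (3/2)"
  assumes "\<mu> > 0" "\<gamma> \<ge> 0" "x \<ge> 0"
  shows "exp (- \<gamma> * x / \<mu> - \<mu> * x\<^sup>2) * tricomiU a (1/2) ((c + sqrt \<mu> * x)\<^sup>2)
       = tilted_pcf c a (c + sqrt \<mu> * x)"
proof -
  have c: "c * sqrt \<mu> = \<gamma> / \<mu>" "c \<ge> 0"
    unfolding c_def using assms by (simp_all add: powr_three_halves field_simps)
  have "c * (c + sqrt \<mu> * x) - (c + sqrt \<mu> * x)\<^sup>2 = - (c * sqrt \<mu>) * x - (sqrt \<mu>)\<^sup>2 * x\<^sup>2"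
    by (simp add: algebra_simps power2_eq_square)
  also have "\<dots> = - \<gamma> * x / \<mu> - \<mu> * x\<^sup>2" using c assms(2) by simp
  finally have "exp (- \<gamma> * x / \<mu> - \<mu> * x\<^sup>2)
      = exp (c * (c + sqrt \<mu> * x) - (c + sqrt \<mu> * x)\<^sup>2 / 2) * exp (- (c + sqrt \<mu> * x)\<^sup>2 / 2)"
    by (simp flip: exp_add)
  then show ?thesis
    unfolding tilted_pcf_def pcf_def using tricomiU_one_half c assms by simp
qed

lemma tilt_parameters_balance:
  fixes \<mu> \<gamma> :: real
  assumes "\<mu> > 0"
  shows "(\<gamma> / \<mu> powr (3/2))\<^sup>2 + 4 * (- \<gamma>\<^sup>2 / (4 * \<mu> ^ 3) + 1/2) = 2"
  using assms by (simp add: powr_three_halves power_divide power_mult_distrib power3_eq_cube power2_eq_square)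

theorem lemma3p15:
  fixes \<mu> \<gamma> :: real and h :: "real \<Rightarrow> real"
  assumes "\<mu> > 0" and "\<gamma> > 0"
    and h_def: "\<And>x. h x = exp (- \<gamma> * x / \<mu> - \<mu> * x\<^sup>2) *
        tricomiU (- \<gamma>\<^sup>2 / (4 * \<mu> ^ 3) + 1 / 2) (1 / 2)
                 ((\<gamma> / \<mu> powr (3 / 2) + sqrt \<mu> * x)\<^sup>2)"
  shows "(\<forall>x\<ge>0. h x > 0)
       \<and> (\<exists>h1 h2. (\<forall>x\<ge>0. (h has_real_derivative h1 x) (at x within {0..}))
                 \<and> (\<forall>x\<ge>0. (h1 has_real_derivative h2 x) (at x within {0..}))
                 \<and> h2 0 = 0
                 \<and> (\<forall>x>0. h1 x < 0))
       \<and> h integrable_on {0..}"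
proof -
  define c where "c = \<gamma> / \<mu> powr (3/2)"
  define a where "a = - \<gamma>\<^sup>2 / (4 * \<mu> ^ 3) + 1 / 2"
  have ca: "c\<^sup>2 + 4 * a = 2" unfolding c_def a_def using assms(1) by (rule tilt_parameters_balance)
  then have c: "c \<ge> 0" "c\<^sup>2 + 4 * a \<ge> 2" using assms by (simp_all add: c_def)
  let ?s = "\<lambda>x. c + sqrt \<mu> * x"
  have h_eq: "h x = tilted_pcf c a (?s x)" if "x \<ge> 0" for x
    unfolding h_def c_def a_def by (rule exp_tricomiU_eq_tilted_pcf) (use assms that in auto)
  define h1 where "h1 x = tilted_pcf' c a (?s x) * sqrt \<mu>" for x
  define h2 where "h2 x = tilted_pcf'' c a (?s x) * sqrt \<mu> * sqrt \<mu>" for x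
  have h1: "(h has_real_derivative h1 x) (at x within {0..})" if "x \<ge> 0" for x
    unfolding h1_def
    by (rule has_field_derivative_transform_within[OF has_field_derivative_at_within
          [OF DERIV_affine_comp[OF tilted_pcf_has_derivative]] zero_less_one])
       (use that h_eq in simp_all)
  have h2: "(h1 has_real_derivative h2 x) (at x within {0..})" for x
    unfolding h1_def[abs_def] h2_def
    by (rule has_field_derivative_at_within[OF DERIV_cmult_right[OF DERIV_affine_comp[OF tilted_pcf'_has_derivative]]])
  have "h integrable_on {0..}"
    using assms(1) tilted_pcf_affine_le_gaussian[OF c, of "sqrt \<mu>"] h_eq
    by (intro integrable_on_Ici_if_gaussian_bound[where m = "\<mu> / 2"] DERIV_continuous_on[OF h1]) auto
  moreover have "h2 0 = 0" unfolding h2_def using tilted_pcf''_eq_0[OF ca] by simp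
  moreover have "h1 x < 0" if "x > 0" for x
    using tilted_pcf'_neg[OF c, of "?s x"] that assms(1) unfolding h1_def by (simp add: mult_neg_pos)
  moreover have "h x > 0" if "x \<ge> 0" for x
    using tilted_pcf_pos[OF c, of "?s x"] h_eq[OF that] that assms(1) by simp
  ultimately show ?thesis using h1 h2 by blast
qed

end
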